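(* Every BMDP $\mathcal B$ has an optimal static strategy: there is a static strategy $\sigma^*$ such that $\mathrm{ETotal}_*(q,\sigma^* )=\mathrm{ETotal}_*(q)$ for every type $q\in\mathcal T$.
   Context: A branching Markov decision process (BMDP) is a tuple $\mathcal B=(\mathcal T,A,p,c)$ where $\mathcal T$ is a finite set of types, $A$ is a finite set of actions, $p:\mathcal T\times A\to \mathrm{Dist}(\mathcal T^* )$ is a partial function assigning to some pairs $(q,a)$ a probability distribution with finite support over the set $\mathcal T^*$ of finite lists of types, and $c:\mathcal T\times A\to\mathbb R_{>0}$ is a cost function with strictly positive values. $A(q)$ denotes the (nonempty) set of actions $a$ for which $p(q,a)$ is defined. For a list $\alpha$, $|\alpha|$ is its length and $\alpha_i$ its $i$-th element; $\varepsilon$ is the empty list. Semantics: the BMDP induces an MDP whose states are lists $\alpha\in\mathcal T^*$. In state $\alpha$ the enabled actions are pairs $(i,a)$ with $1\le i\le|\alpha|$ and $a\in A(\alpha_i)$; taking $(i,a)$ incurs cost $c(\alpha_i,a)$ and moves to $\alpha_1\cdots\alpha_{i-1}\cdot\beta\cdot\alpha_{i+1}\cdots\alpha_{|\alpha|}$ with probability $p(\alpha_i,a)(\beta)$. The state $\varepsilon$ has no actions and is absorbing with no further cost. A strategy maps each finite history to a probability distribution over actions enabled in its last state; a strategy $\sigma$ and initial state $\alpha$ induce a probability measure on runs. $\mathrm{ETotal}_N(\alpha,\sigma)$ is the expected sum of costs in the first $N$ steps, $\mathrm{ETotal}_*(\alpha,\sigma)=\lim_{N\to\infty}\mathrm{ETotal}_N(\alpha,\sigma)\in[0,\infty]$,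 and $\mathrm{ETotal}_*(\alpha)=\inf_\sigma\mathrm{ETotal}_*(\alpha,\sigma)$ over all strategies. A strategy is static if there is a map $s:\mathcal T\to A$ with $s(q)\in A(q)$ such that, in every history whose last state $\alpha$ is nonempty, the strategy chooses (with probability 1) the action $(1,s(\alpha_1))$. *)

theory Defs
  imports "HOL-Probability.Probability_Mass_Function"
begin

(* A BMDP over a finite type of types 't and finite type of actions 'a is given by
   p :: 't => 'a => 't list pmf option  (partial; None = action not available)
   c :: 't => 'a => real                (cost). *)

definition acts :: "('t \<Rightarrow> 'a \<Rightarrow> 't list pmf option) \<Rightarrow> 't \<Rightarrow> 'a set" where
  "acts p q = {a. p q a \<noteq> None}"

definition wf_bmdp :: "('t \<Rightarrow> 'a \<Rightarrow> 't list pmf option) \<Rightarrow> ('t \<Rightarrow> 'a \<Rightarrow> real) \<Rightarrow> bool" where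
  "wf_bmdp p c \<longleftrightarrow>
     (\<forall>q. acts p q \<noteq> {}) \<and>
     (\<forall>q a d. p q a = Some d \<longrightarrow> finite (set_pmf d)) \<and>
     (\<forall>q a. c q a > 0)"

(* Histories of the induced MDP: initial state and the list of (action, successor state)
   steps taken so far. Actions are pairs (i, a) with 0-based position i. *)
type_synonym ('t, 'a) hist = "'t list \<times> ((nat \<times> 'a) \<times> 't list) list"

definition hlast :: "('t, 'a) hist \<Rightarrow> 't list" where
  "hlast h = (if snd h = [] then fst h else snd (last (snd h)))"

definition enabled :: "('t \<Rightarrow> 'a \<Rightarrow> 't list pmf option) \<Rightarrow> 't list \<Rightarrow> (nat \<times> 'a) set" where
  "enabled p \<alpha> = {(i, a). i < length \<alpha> \<and> a \<in> acts p (\<alpha> ! i)}"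

definition successor :: "'t list \<Rightarrow> nat \<Rightarrow> 't list \<Rightarrow> 't list" where
  "successor \<alpha> i \<beta> = take i \<alpha> @ \<beta> @ drop (Suc i) \<alpha>"

definition valid_strategy ::
  "('t \<Rightarrow> 'a \<Rightarrow> 't list pmf option) \<Rightarrow> (('t, 'a) hist \<Rightarrow> (nat \<times> 'a) pmf) \<Rightarrow> bool" where
  "valid_strategy p \<sigma> \<longleftrightarrow> (\<forall>h. hlast h \<noteq> [] \<longrightarrow> set_pmf (\<sigma> h) \<subseteq> enabled p (hlast h))"

definition is_static ::
  "('t \<Rightarrow> 'a \<Rightarrow> 't list pmf option) \<Rightarrow> (('t, 'a) hist \<Rightarrow> (nat \<times> 'a) pmf) \<Rightarrow> bool" where
  "is_static p \<sigma> \<longleftrightarrow> (\<exists>s. (\<forall>q. s q \<in> acts p q) \<and>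
      (\<forall>h. hlast h \<noteq> [] \<longrightarrow> \<sigma> h = return_pmf (0, s (hd (hlast h)))))"

(* Expected total cost of the first n steps, continuing from history h
   (unfolding of the expectation under the measure induced by the strategy). *)
primrec ETN ::
  "('t \<Rightarrow> 'a \<Rightarrow> 't list pmf option) \<Rightarrow> ('t \<Rightarrow> 'a \<Rightarrow> real) \<Rightarrow>
   (('t, 'a) hist \<Rightarrow> (nat \<times> 'a) pmf) \<Rightarrow> nat \<Rightarrow> ('t, 'a) hist \<Rightarrow> ennreal" where
  "ETN p c \<sigma> 0 h = 0"
| "ETN p c \<sigma> (Suc n) h =
     (let \<alpha> = hlast h in
      if \<alpha> = [] then 0 else
      (\<Sum>x\<in>set_pmf (\<sigma> h).
         ennreal (pmf (\<sigma> h) x) *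
         (ennreal (c (\<alpha> ! fst x) (snd x)) +
          (\<Sum>\<beta>\<in>set_pmf (the (p (\<alpha> ! fst x) (snd x))).
             ennreal (pmf (the (p (\<alpha> ! fst x) (snd x))) \<beta>) *
             ETN p c \<sigma> n (fst h, snd h @ [(x, successor \<alpha> (fst x) \<beta>)])))))"

definition ETotal_N where
  "ETotal_N p c n \<alpha> \<sigma> = ETN p c \<sigma> n (\<alpha>, [])"

definition ETotal_star where
  "ETotal_star p c \<alpha> \<sigma> = (SUP n. ETotal_N p c n \<alpha> \<sigma>)"

definition ETotal_opt where
  "ETotal_opt p c \<alpha> = (INF \<sigma> \<in> {\<sigma>. valid_strategy p \<sigma>}. ETotal_star p c \<alpha> \<sigma>)"

end

theory Submission
  imports Defs
begin

text \<open>
  Value iteration on single types, \<open>v\<^sub>k\<^sub>+\<^sub>1 q = min\<^sub>a (c q a + E (\<Sum>t\<in>\<beta>. v\<^sub>k t))\<close>,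
  increases to a limit \<open>v\<close>. As there are finitely many actions, some action \<open>s q\<close> satisfies
  the Bellman inequality for \<open>v\<close> at every type \<open>q\<close>; because the offspring of a type evolve
  independently, their costs add up, and the static strategy \<open>s\<close> costs at most \<open>v q\<close>.

  Conversely, \<open>v\<^sub>k q\<close> is at most the limit \<open>D\<close> of the optimal finite-horizon costs of the
  list MDP started in \<open>[q]\<close>, which bounds the cost of every strategy. To see this, annotate
  list entries with a remaining generation budget and let \<open>\<Psi>\<close> be the sum of \<open>v\<^sub>b\<close> over
  the entries with budget \<open>b\<close>: \<open>\<Psi>\<close> satisfies the Bellman inequality for every action, while
  \<open>D\<close> satisfies the reverse one for some action. All costs are at least some \<open>m > 0\<close>, so
  \<open>D \<alpha> \<ge> m |\<alpha>| \<ge> l \<Psi> \<alpha>\<close> for a fixed \<open>0 < l \<le> 1\<close>; following the optimal actions for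
  \<open>n\<close> steps gives \<open>l \<Psi> + (1 - l) D\<^sub>n \<le> D\<close> for every horizon \<open>n\<close>, hence \<open>\<Psi> \<le> D\<close>.
\<close>

lemma ex_SUP_le_if_Min_le:
  fixes G :: "'x \<Rightarrow> nat \<Rightarrow> 'b::complete_linorder"
  assumes "finite X" "X \<noteq> {}" "\<And>x. x \<in> X \<Longrightarrow> incseq (G x)"
    and "\<And>n. Min ((\<lambda>x. G x n) ` X) \<le> d"
  shows "\<exists>x\<in>X. (SUP n. G x n) \<le> d"
proof (rule ccontr)
  assume "\<not> ?thesis"
  then have "\<forall>x\<in>X. \<exists>n. d < G x n"
    by (auto simp: not_le less_SUP_iff)
  have ev: "\<forall>\<^sub>F n in sequentially. d < G x n" if x: "x \<in> X" for x
  proof -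
    obtain n0 where "d < G x n0"
      using x \<open>\<forall>x\<in>X. \<exists>n. d < G x n\<close> by blast
    then have "d < G x n" if "n0 \<le> n" for n
      using incseqD[OF assms(3)[OF x] that] by (rule order_less_le_trans)
    then show ?thesis
      unfolding eventually_sequentially by blast
  qed
  have "\<forall>\<^sub>F n in sequentially. \<forall>x\<in>X. d < G x n"
    using ev by (intro eventually_ball_finite[OF assms(1)]) blast
  then obtain n where "\<forall>x\<in>X. d < G x n"
    by (auto simp: eventually_sequentially)
  then have "d < Min ((\<lambda>x. G x n) ` X)"
    using assms(1,2) by simp
  with assms(4) show False
    by (simp add: not_le[symmetric])
qed

lemma sum_list_SUP_ennreal:
  fixes f :: "nat \<Rightarrow> 'b \<Rightarrow> ennreal"
  assumes "\<And>x. incseq (\<lambda>n. f n x)"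
  shows "sum_list (map (\<lambda>x. SUP n. f n x) xs) = (SUP n. sum_list (map (f n) xs))"
  using ennreal_SUP_sum[of "{0..<length xs}" "\<lambda>j n. f n (xs ! j)"] assms
  by (simp add: sum_list_sum_nth)

lemma ennreal_le_if_convex_combination_le:
  fixes a d :: ennreal and l :: real
  assumes l: "0 < l" "l \<le> 1" and le: "ennreal l * a + ennreal (1 - l) * d \<le> d"
  shows "a \<le> d"
proof (cases "d = top")
  case False
  have "ennreal (1 - l) * d + ennreal l * a \<le> ennreal (1 - l) * d + ennreal l * d"
    using le l by (simp add: add.commute distrib_right[symmetric] ennreal_plus[symmetric])
  then have "ennreal l * a \<le> ennreal l * d"
    using False by (simp add: ennreal_add_left_cancel_le ennreal_mult_eq_top_iff)
  then show ?thesis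
    using l by (simp add: ennreal_mult_le_mult_iff)
qed simp

text \<open>Expectation in the form used by \<open>ETN\<close>; it is only meaningful for finite support (the
  sum is \<open>0\<close> otherwise), which \<open>wf_bmdp\<close> guarantees for all offspring distributions.\<close>

definition pmf_expect :: "'b pmf \<Rightarrow> ('b \<Rightarrow> ennreal) \<Rightarrow> ennreal" where
  "pmf_expect d f = (\<Sum>x\<in>set_pmf d. ennreal (pmf d x) * f x)"

lemma pmf_expect_mono:
  "(\<And>x. x \<in> set_pmf d \<Longrightarrow> f x \<le> g x) \<Longrightarrow> pmf_expect d f \<le> pmf_expect d g"
  unfolding pmf_expect_def by (intro sum_mono mult_left_mono) auto

lemma pmf_expect_const: "finite (set_pmf d) \<Longrightarrow> pmf_expect d (\<lambda>_. k) = k"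
  unfolding pmf_expect_def by (simp add: sum_distrib_right[symmetric] sum_pmf_eq_1)

lemma pmf_expect_add: "pmf_expect d (\<lambda>x. f x + g x) = pmf_expect d f + pmf_expect d g"
  unfolding pmf_expect_def by (simp add: distrib_left sum.distrib)

lemma pmf_expect_cmult: "pmf_expect d (\<lambda>x. k * f x) = k * pmf_expect d f"
  unfolding pmf_expect_def by (simp add: sum_distrib_left mult.left_commute)

lemma pmf_expect_SUP:
  assumes "\<And>x. incseq (\<lambda>n. f n x)"
  shows "pmf_expect d (\<lambda>x. SUP n. f n x) = (SUP n. pmf_expect d (f n))"
  unfolding pmf_expect_def SUP_mult_left_ennreal
  using assms by (intro ennreal_SUP_sum[symmetric]) (auto simp: incseq_def mult_left_mono)

locale bellman_system =
  fixes A :: "'s \<Rightarrow> 'x set"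
    and F :: "('s \<Rightarrow> ennreal) \<Rightarrow> 's \<Rightarrow> 'x \<Rightarrow> ennreal"
  assumes finite_A: "finite (A s)"
    and F_mono: "(\<And>s. V s \<le> W s) \<Longrightarrow> F V s x \<le> F W s x"
    and F_SUP: "(\<And>s. incseq (\<lambda>n. Vs n s)) \<Longrightarrow> F (\<lambda>s. SUP n. Vs n s) s x = (SUP n. F (Vs n) s x)"
begin

fun bellman_iter :: "nat \<Rightarrow> 's \<Rightarrow> ennreal" where
  "bellman_iter 0 s = 0"
| "bellman_iter (Suc n) s = (if A s = {} then 0 else Min (F (bellman_iter n) s ` A s))"

definition bellman_lim :: "'s \<Rightarrow> ennreal" where
  "bellman_lim s = (SUP n. bellman_iter n s)"

lemma bellman_iter_Suc_le: "x \<in> A s \<Longrightarrow> bellman_iter (Suc n) s \<le> F (bellman_iter n) s x"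
  using finite_A by (auto intro!: Min_le simp del: Min_le_iff)

lemma le_bellman_iter_Suc:
  "A s \<noteq> {} \<Longrightarrow> (\<And>x. x \<in> A s \<Longrightarrow> b \<le> F (bellman_iter n) s x) \<Longrightarrow> b \<le> bellman_iter (Suc n) s"
  using finite_A by simp

lemma incseq_bellman_iter: "incseq (\<lambda>n. bellman_iter n s)"
proof (rule incseq_SucI)
  show "bellman_iter n s \<le> bellman_iter (Suc n) s" for n
  proof (induction n arbitrary: s)
    case (Suc n)
    show ?case
    proof (cases "A s = {}")
      case False
      show ?thesis
      proof (rule le_bellman_iter_Suc[OF False])
        fix x assume "x \<in> A s"
        then have "bellman_iter (Suc n) s \<le> F (bellman_iter n) s x"
          by (rule bellman_iter_Suc_le)
        also have "\<dots> \<le> F (bellman_iter (Suc n)) s x"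
          by (rule F_mono) (rule Suc.IH)
        finally show "bellman_iter (Suc n) s \<le> \<dots>" .
      qed
    qed simp
  qed simp
qed

lemma bellman_iter_le_lim: "bellman_iter n s \<le> bellman_lim s"
  unfolding bellman_lim_def by (rule SUP_upper) simp

lemma ex_F_bellman_lim_le:
  assumes "A s \<noteq> {}"
  shows "\<exists>x\<in>A s. F bellman_lim s x \<le> bellman_lim s"
proof -
  have "\<exists>x\<in>A s. (SUP n. F (bellman_iter n) s x) \<le> bellman_lim s"
  proof (rule ex_SUP_le_if_Min_le[OF finite_A assms])
    show "incseq (\<lambda>n. F (bellman_iter n) s x)" for x
      using incseq_bellman_iter by (auto simp: incseq_def intro!: F_mono)
    show "Min ((\<lambda>x. F (bellman_iter n) s x) ` A s) \<le> bellman_lim s" for n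
      using bellman_iter_le_lim[of "Suc n" s] assms by simp
  qed
  then show ?thesis
    unfolding bellman_lim_def by (simp add: F_SUP[OF incseq_bellman_iter])
qed

end

definition action_value ::
  "('t \<Rightarrow> 'a \<Rightarrow> 't list pmf option) \<Rightarrow> ('t \<Rightarrow> 'a \<Rightarrow> real) \<Rightarrow>
   ('t list \<Rightarrow> ennreal) \<Rightarrow> 't list \<Rightarrow> nat \<times> 'a \<Rightarrow> ennreal" where
  "action_value p c V \<alpha> x = ennreal (c (\<alpha> ! fst x) (snd x)) +
     pmf_expect (the (p (\<alpha> ! fst x) (snd x))) (\<lambda>\<beta>. V (successor \<alpha> (fst x) \<beta>))"

definition type_action_value ::
  "('t \<Rightarrow> 'a \<Rightarrow> 't list pmf option) \<Rightarrow> ('t \<Rightarrow> 'a \<Rightarrow> real) \<Rightarrow>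
   ('t \<Rightarrow> ennreal) \<Rightarrow> 't \<Rightarrow> 'a \<Rightarrow> ennreal" where
  "type_action_value p c v q a =
     ennreal (c q a) + pmf_expect (the (p q a)) (\<lambda>\<beta>. sum_list (map v \<beta>))"

lemma length_successor: "i < length \<alpha> \<Longrightarrow> length (successor \<alpha> i \<beta>) = length \<alpha> - 1 + length \<beta>"
  unfolding successor_def by simp

text \<open>Entries with budget \<open>0\<close> pass budget \<open>0\<close> on (truncated subtraction); this is harmless
  since \<open>v\<^sub>0 = 0\<close>.\<close>

definition budget_successor :: "('t \<times> nat) list \<Rightarrow> nat \<Rightarrow> 't list \<Rightarrow> ('t \<times> nat) list" where
  "budget_successor \<alpha> i \<beta> = take i \<alpha> @ map (\<lambda>q. (q, snd (\<alpha> ! i) - 1)) \<beta> @ drop (Suc i) \<alpha>"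

lemma map_fst_budget_successor:
  "i < length \<alpha> \<Longrightarrow> map fst (budget_successor \<alpha> i \<beta>) = successor (map fst \<alpha>) i \<beta>"
  unfolding budget_successor_def successor_def by (simp add: take_map drop_map o_def)

lemma budget_successor_bounded:
  assumes "\<forall>z\<in>set \<alpha>. snd z \<le> K" "i < length \<alpha>"
  shows "\<forall>z\<in>set (budget_successor \<alpha> i \<beta>). snd z \<le> K"
  using assms nth_mem[OF assms(2)] set_take_subset[of i \<alpha>] set_drop_subset[of "Suc i" \<alpha>]
  unfolding budget_successor_def by fastforce

definition static_strategy :: "('t \<Rightarrow> 'a) \<Rightarrow> ('t, 'a) hist \<Rightarrow> (nat \<times> 'a) pmf" where
  "static_strategy s h = return_pmf (0, s (hd (hlast h)))"

lemma valid_static_strategy: "(\<And>q. s q \<in> acts p q) \<Longrightarrow> valid_strategy p (static_strategy s)"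
  unfolding valid_strategy_def static_strategy_def enabled_def by (auto simp: hd_conv_nth)

lemma is_static_static_strategy: "(\<And>q. s q \<in> acts p q) \<Longrightarrow> is_static p (static_strategy s)"
  unfolding is_static_def static_strategy_def by blast

locale bmdp =
  fixes p :: "'t::finite \<Rightarrow> 'a::finite \<Rightarrow> 't list pmf option"
    and c :: "'t \<Rightarrow> 'a \<Rightarrow> real"
  assumes wf: "wf_bmdp p c"
begin

lemma acts_nonempty: "acts p q \<noteq> {}"
  using wf unfolding wf_bmdp_def by blast

lemma finite_set_pmf_action: "a \<in> acts p q \<Longrightarrow> finite (set_pmf (the (p q a)))"
  using wf unfolding wf_bmdp_def acts_def by auto

lemma enabled_eq_empty_iff: "enabled p \<alpha> = {} \<longleftrightarrow> \<alpha> = []"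
  using acts_nonempty unfolding enabled_def by (cases \<alpha>) force+

lemma finite_enabled: "finite (enabled p \<alpha>)"
  by (rule finite_subset[of _ "{..<length \<alpha>} \<times> UNIV"]) (auto simp: enabled_def)

sublocale horizon: bellman_system "enabled p" "action_value p c"
proof
  show "finite (enabled p \<alpha>)" for \<alpha>
    by (rule finite_enabled)
  show "action_value p c V \<alpha> x \<le> action_value p c W \<alpha> x" if "\<And>\<alpha>. V \<alpha> \<le> W \<alpha>" for V W \<alpha> x
    unfolding action_value_def using that by (intro add_left_mono pmf_expect_mono) auto
  show "action_value p c (\<lambda>\<alpha>. SUP n. Vs n \<alpha>) \<alpha> x = (SUP n. action_value p c (Vs n) \<alpha> x)"
    if "\<And>\<alpha>. incseq (\<lambda>n. Vs n \<alpha>)" for Vs \<alpha> x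
    unfolding action_value_def using that by (simp add: pmf_expect_SUP ennreal_SUP_add_right)
qed

text \<open>\<open>generation.bellman_iter k q\<close> is the optimal cost of the first \<open>k\<close> generations
  of the branching process started with a single \<open>q\<close>.\<close>

sublocale generation: bellman_system "acts p" "type_action_value p c"
proof
  show "finite (acts p q)" for q
    by simp
  show "type_action_value p c v q a \<le> type_action_value p c w q a" if "\<And>q. v q \<le> w q" for v w q a
    unfolding type_action_value_def using that
    by (intro add_left_mono pmf_expect_mono sum_list_mono) auto
  show "type_action_value p c (\<lambda>q. SUP n. vs n q) q a = (SUP n. type_action_value p c (vs n) q a)"
    if "\<And>q. incseq (\<lambda>n. vs n q)" for vs q a
  proof -
    have "incseq (\<lambda>n. sum_list (map (vs n) \<beta>))" for \<beta>
      using that by (auto simp: incseq_def intro!: sum_list_mono)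
    then show ?thesis
      unfolding type_action_value_def
      by (simp add: sum_list_SUP_ennreal[OF that] pmf_expect_SUP ennreal_SUP_add_right)
  qed
qed

lemma ETN_Suc:
  "hlast h \<noteq> [] \<Longrightarrow> ETN p c \<sigma> (Suc n) h =
     pmf_expect (\<sigma> h)
       (\<lambda>x. action_value p c (\<lambda>\<alpha>. ETN p c \<sigma> n (fst h, snd h @ [(x, \<alpha>)])) (hlast h) x)"
  by (simp add: Let_def pmf_expect_def action_value_def)

lemma horizon_iter_le_ETN:
  assumes "valid_strategy p \<sigma>"
  shows "horizon.bellman_iter n (hlast h) \<le> ETN p c \<sigma> n h"
proof (induction n arbitrary: h)
  case (Suc n)
  show ?case
  proof (cases "hlast h = []")
    case False
    define \<alpha> where "\<alpha> = hlast h"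
    have enabled: "set_pmf (\<sigma> h) \<subseteq> enabled p \<alpha>"
      using assms False unfolding valid_strategy_def \<alpha>_def by blast
    then have "finite (set_pmf (\<sigma> h))"
      using finite_enabled by (rule finite_subset)
    then have "horizon.bellman_iter (Suc n) \<alpha> =
        pmf_expect (\<sigma> h) (\<lambda>_. horizon.bellman_iter (Suc n) \<alpha>)"
      by (simp add: pmf_expect_const)
    also have "\<dots> \<le> pmf_expect (\<sigma> h) (\<lambda>x. action_value p c (horizon.bellman_iter n) \<alpha> x)"
      using enabled by (intro pmf_expect_mono horizon.bellman_iter_Suc_le) blast
    also have "\<dots> \<le> pmf_expect (\<sigma> h)
        (\<lambda>x. action_value p c (\<lambda>\<alpha>'. ETN p c \<sigma> n (fst h, snd h @ [(x, \<alpha>')])) \<alpha> x)"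
    proof (intro pmf_expect_mono horizon.F_mono)
      fix x \<alpha>'
      show "horizon.bellman_iter n \<alpha>' \<le> ETN p c \<sigma> n (fst h, snd h @ [(x, \<alpha>')])"
        using Suc.IH[of "(fst h, snd h @ [(x, \<alpha>')])"] by (simp add: hlast_def)
    qed
    also have "\<dots> = ETN p c \<sigma> (Suc n) h"
      unfolding \<alpha>_def by (rule ETN_Suc[OF False, symmetric])
    finally show ?thesis
      by (simp add: \<alpha>_def)
  qed (simp add: enabled_eq_empty_iff)
qed simp

definition min_cost :: real where
  "min_cost = Min (range (case_prod c))"

lemma min_cost_pos: "0 < min_cost"
proof -
  have "min_cost \<in> range (case_prod c)"
    unfolding min_cost_def by (intro Min_in) auto
  then show ?thesis
    using wf unfolding wf_bmdp_def by auto
qed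

lemma min_cost_le: "min_cost \<le> c q a"
  unfolding min_cost_def by (rule Min_le) auto

lemma horizon_iter_ge_length:
  "ennreal min_cost * of_nat (min n (length \<alpha>)) \<le> horizon.bellman_iter n \<alpha>"
proof (induction n arbitrary: \<alpha>)
  case (Suc n)
  show ?case
  proof (cases "\<alpha> = []")
    case False
    show ?thesis
    proof (rule horizon.le_bellman_iter_Suc)
      show "enabled p \<alpha> \<noteq> {}"
        using False by (simp add: enabled_eq_empty_iff)
    next
      fix x assume x: "x \<in> enabled p \<alpha>"
      define d where "d = the (p (\<alpha> ! fst x) (snd x))"
      have i: "fst x < length \<alpha>" and "finite (set_pmf d)"
        using x finite_set_pmf_action unfolding enabled_def d_def by auto
      have "ennreal min_cost * of_nat (min (Suc n) (length \<alpha>)) =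
            ennreal min_cost + ennreal min_cost * of_nat (min n (length \<alpha> - 1))"
        using False by (cases \<alpha>) (simp_all add: distrib_left)
      also have "\<dots> \<le> ennreal (c (\<alpha> ! fst x) (snd x)) +
          pmf_expect d (\<lambda>_. ennreal min_cost * of_nat (min n (length \<alpha> - 1)))"
        using \<open>finite (set_pmf d)\<close> by (simp add: pmf_expect_const ennreal_leI min_cost_le)
      also have "\<dots> \<le> action_value p c (horizon.bellman_iter n) \<alpha> x"
        unfolding action_value_def[of p c "horizon.bellman_iter n"] d_def[symmetric]
      proof (intro add_left_mono pmf_expect_mono)
        fix \<beta> assume "\<beta> \<in> set_pmf d"
        have "min n (length \<alpha> - 1) \<le> min n (length (successor \<alpha> (fst x) \<beta>))"
          using i by (simp add: length_successor)
        then have "ennreal min_cost * of_nat (min n (length \<alpha> - 1)) \<le>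
            ennreal min_cost * of_nat (min n (length (successor \<alpha> (fst x) \<beta>)))"
          by (intro mult_left_mono) simp_all
        also have "\<dots> \<le> horizon.bellman_iter n (successor \<alpha> (fst x) \<beta>)"
          by (rule Suc.IH)
        finally show "ennreal min_cost * of_nat (min n (length \<alpha> - 1)) \<le> \<dots>" .
      qed
      finally show "ennreal min_cost * of_nat (min (Suc n) (length \<alpha>)) \<le> \<dots>" .
    qed
  qed simp
qed simp

lemma horizon_lim_ge_length: "ennreal min_cost * of_nat (length \<alpha>) \<le> horizon.bellman_lim \<alpha>"
  using horizon_iter_ge_length[of "length \<alpha>" \<alpha>] horizon.bellman_iter_le_lim[of "length \<alpha>" \<alpha>]
  by simp

lemma generation_iter_finite: "generation.bellman_iter k q < top"
proof (induction k arbitrary: q)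
  case (Suc k)
  obtain a where "a \<in> acts p q"
    using acts_nonempty by blast
  have "generation.bellman_iter (Suc k) q \<le> type_action_value p c (generation.bellman_iter k) q a"
    using \<open>a \<in> acts p q\<close> by (rule generation.bellman_iter_Suc_le)
  also have "\<dots> < top"
  proof -
    have "sum_list (map (generation.bellman_iter k) \<beta>) < top" for \<beta>
      using Suc.IH by (induction \<beta>) simp_all
    then show ?thesis
      unfolding type_action_value_def pmf_expect_def
      using finite_set_pmf_action[OF \<open>a \<in> acts p q\<close>] by (simp add: ennreal_mult_less_top)
  qed
  finally show ?case .
qed simp

definition budget_value :: "('t \<times> nat) list \<Rightarrow> ennreal" where
  "budget_value \<alpha> = sum_list (map (\<lambda>(q, k). generation.bellman_iter k q) \<alpha>)"

lemma budget_value_le_action: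
  assumes i: "i < length \<alpha>" and a: "a \<in> acts p (fst (\<alpha> ! i))"
  shows "budget_value \<alpha> \<le> ennreal (c (fst (\<alpha> ! i)) a) +
    pmf_expect (the (p (fst (\<alpha> ! i)) a)) (\<lambda>\<beta>. budget_value (budget_successor \<alpha> i \<beta>))"
proof -
  obtain q k where qk: "\<alpha> ! i = (q, k)"
    by fastforce
  define d where "d = the (p q a)"
  define pre post where "pre = take i \<alpha>" and "post = drop (Suc i) \<alpha>"
  define R where "R = budget_value pre + budget_value post"
  have "finite (set_pmf d)"
    using a finite_set_pmf_action by (simp add: qk d_def)
  have \<alpha>_split: "\<alpha> = pre @ (q, k) # post"
    using id_take_nth_drop[OF i] by (simp add: qk pre_def post_def)
  have "budget_value \<alpha> = generation.bellman_iter k q + R"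
    by (simp add: \<alpha>_split R_def budget_value_def ac_simps)
  also have "\<dots> \<le> type_action_value p c (generation.bellman_iter (k - 1)) q a + R"
  proof (intro add_right_mono)
    show "generation.bellman_iter k q \<le> type_action_value p c (generation.bellman_iter (k - 1)) q a"
      using a generation.bellman_iter_Suc_le[of a q "k - 1"] by (cases k) (simp_all add: qk)
  qed
  also have "\<dots> = ennreal (c q a) +
      pmf_expect d (\<lambda>\<beta>. sum_list (map (generation.bellman_iter (k - 1)) \<beta>) + R)"
    using \<open>finite (set_pmf d)\<close>
    by (simp add: type_action_value_def pmf_expect_add pmf_expect_const d_def add.assoc)
  also have "\<dots> = ennreal (c q a) + pmf_expect d (\<lambda>\<beta>. budget_value (budget_successor \<alpha> i \<beta>))"
    by (simp add: budget_successor_def budget_value_def R_def pre_def post_def qk o_def ac_simps)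
  finally show ?thesis
    by (simp add: qk d_def)
qed

lemma budget_value_le_length:
  assumes "\<forall>z\<in>set \<alpha>. snd z \<le> K" "\<And>q. generation.bellman_iter K q \<le> U"
  shows "budget_value \<alpha> \<le> U * of_nat (length \<alpha>)"
proof -
  have "budget_value \<alpha> \<le> sum_list (map (\<lambda>_. U) \<alpha>)"
    unfolding budget_value_def
  proof (intro sum_list_mono)
    fix z assume "z \<in> set \<alpha>"
    then have "generation.bellman_iter (snd z) (fst z) \<le> generation.bellman_iter K (fst z)"
      using assms(1) generation.incseq_bellman_iter by (simp add: incseq_def)
    then show "(case z of (q, k) \<Rightarrow> generation.bellman_iter k q) \<le> U"
      unfolding case_prod_beta using assms(2) by (rule order_trans)
  qed
  then show ?thesis
    by (simp add: sum_list_triv mult.commute)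
qed

lemma budget_horizon_convex_le_action:
  assumes x: "(i, a) \<in> enabled p (map fst \<alpha>)" and LM: "L + M = 1"
  shows "L * budget_value \<alpha> + M * horizon.bellman_iter (Suc n) (map fst \<alpha>)
    \<le> ennreal (c (fst (\<alpha> ! i)) a) + pmf_expect (the (p (fst (\<alpha> ! i)) a))
        (\<lambda>\<beta>. L * budget_value (budget_successor \<alpha> i \<beta>) +
             M * horizon.bellman_iter n (successor (map fst \<alpha>) i \<beta>))"
proof -
  have i: "i < length \<alpha>" and a: "a \<in> acts p (fst (\<alpha> ! i))"
    using x by (auto simp: enabled_def)
  define C d where "C = ennreal (c (fst (\<alpha> ! i)) a)" and "d = the (p (fst (\<alpha> ! i)) a)"
  define P Q where "P = (\<lambda>\<beta>. budget_value (budget_successor \<alpha> i \<beta>))"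
    and "Q = (\<lambda>\<beta>. horizon.bellman_iter n (successor (map fst \<alpha>) i \<beta>))"
  have "L * budget_value \<alpha> + M * horizon.bellman_iter (Suc n) (map fst \<alpha>)
      \<le> L * (C + pmf_expect d P) + M * (C + pmf_expect d Q)"
    using budget_value_le_action[OF i a] horizon.bellman_iter_Suc_le[OF x, of n] i
    by (intro add_mono mult_left_mono)
      (simp_all add: action_value_def[of p c "horizon.bellman_iter n"] C_def d_def P_def Q_def)
  also have "\<dots> = (L + M) * C + pmf_expect d (\<lambda>\<beta>. L * P \<beta> + M * Q \<beta>)"
    by (simp add: pmf_expect_add pmf_expect_cmult distrib_left distrib_right ac_simps)
  finally show ?thesis
    by (simp add: LM C_def d_def P_def Q_def)
qed

lemma budget_value_convex_le_horizon_lim: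
  assumes l: "0 < l" "l \<le> 1"
    and base: "\<And>\<beta>. \<forall>z\<in>set \<beta>. snd z \<le> K \<Longrightarrow>
      ennreal l * budget_value \<beta> \<le> horizon.bellman_lim (map fst \<beta>)"
    and bounded: "\<forall>z\<in>set \<alpha>. snd z \<le> K"
  shows "ennreal l * budget_value \<alpha> + ennreal (1 - l) * horizon.bellman_iter n (map fst \<alpha>)
    \<le> horizon.bellman_lim (map fst \<alpha>)"
  using bounded
proof (induction n arbitrary: \<alpha>)
  case 0
  then show ?case
    using base by simp
next
  case (Suc n)
  show ?case
  proof (cases "\<alpha> = []")
    case True
    then show ?thesis
      by (simp add: budget_value_def enabled_eq_empty_iff)
  next
    case False
    define \<alpha>' where "\<alpha>' = map fst \<alpha>"
    obtain i a where x: "(i, a) \<in> enabled p \<alpha>'"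
      and opt: "action_value p c horizon.bellman_lim \<alpha>' (i, a) \<le> horizon.bellman_lim \<alpha>'"
      using horizon.ex_F_bellman_lim_le[of \<alpha>'] False by (auto simp: enabled_eq_empty_iff \<alpha>'_def)
    have i: "i < length \<alpha>"
      using x by (simp add: enabled_def \<alpha>'_def)
    have LM: "ennreal l + ennreal (1 - l) = 1"
      using l by (simp add: ennreal_plus[symmetric])
    have "ennreal l * budget_value \<alpha> + ennreal (1 - l) * horizon.bellman_iter (Suc n) \<alpha>'
        \<le> ennreal (c (fst (\<alpha> ! i)) a) + pmf_expect (the (p (fst (\<alpha> ! i)) a))
            (\<lambda>\<beta>. ennreal l * budget_value (budget_successor \<alpha> i \<beta>) +
                 ennreal (1 - l) * horizon.bellman_iter n (successor \<alpha>' i \<beta>))"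
      using budget_horizon_convex_le_action[OF x[unfolded \<alpha>'_def] LM] by (simp only: \<alpha>'_def)
    also have "\<dots> \<le> ennreal (c (fst (\<alpha> ! i)) a) + pmf_expect (the (p (fst (\<alpha> ! i)) a))
        (\<lambda>\<beta>. horizon.bellman_lim (successor \<alpha>' i \<beta>))"
      using Suc.IH[OF budget_successor_bounded[OF Suc.prems i]]
      by (intro add_left_mono pmf_expect_mono) (simp add: \<alpha>'_def map_fst_budget_successor[OF i])
    also have "\<dots> \<le> horizon.bellman_lim \<alpha>'"
      using opt i by (simp add: action_value_def \<alpha>'_def)
    finally show ?thesis
      by (simp add: \<alpha>'_def)
  qed
qed

lemma budget_value_le_horizon_lim:
  assumes bounded: "\<forall>z\<in>set \<alpha>. snd z \<le> K"
  shows "budget_value \<alpha> \<le> horizon.bellman_lim (map fst \<alpha>)"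
proof -
  obtain U where U: "min_cost \<le> U" "\<And>q. generation.bellman_iter K q \<le> ennreal U"
  proof
    define U where "U = Max (range (\<lambda>q. enn2real (generation.bellman_iter K q)))"
    show "min_cost \<le> max min_cost U"
      by simp
    fix q
    have "generation.bellman_iter K q = ennreal (enn2real (generation.bellman_iter K q))"
      using generation_iter_finite by (simp add: less_top)
    also have "\<dots> \<le> ennreal (max min_cost U)"
      unfolding U_def by (intro ennreal_leI max.coboundedI2 Max_ge) simp_all
    finally show "generation.bellman_iter K q \<le> ennreal (max min_cost U)" .
  qed
  define l where "l = min_cost / U"
  have l: "0 < l" "l \<le> 1"
    using min_cost_pos U(1) by (simp_all add: l_def)
  have base: "ennreal l * budget_value \<beta> \<le> horizon.bellman_lim (map fst \<beta>)"
    if "\<forall>z\<in>set \<beta>. snd z \<le> K" for \<beta>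
  proof -
    have "ennreal l * budget_value \<beta> \<le> ennreal l * (ennreal U * of_nat (length \<beta>))"
      by (intro mult_left_mono budget_value_le_length[OF that U(2)]) simp
    also have "\<dots> = ennreal min_cost * of_nat (length (map fst \<beta>))"
      using l min_cost_pos U(1)
      by (simp add: mult.assoc[symmetric] ennreal_mult[symmetric] l_def)
    also have "\<dots> \<le> horizon.bellman_lim (map fst \<beta>)"
      by (rule horizon_lim_ge_length)
    finally show ?thesis .
  qed
  have "ennreal l * budget_value \<alpha> + ennreal (1 - l) * horizon.bellman_lim (map fst \<alpha>)
      = (SUP n. ennreal l * budget_value \<alpha> + ennreal (1 - l) * horizon.bellman_iter n (map fst \<alpha>))"
    unfolding horizon.bellman_lim_def by (simp add: SUP_mult_left_ennreal ennreal_SUP_add_right)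
  also have "\<dots> \<le> horizon.bellman_lim (map fst \<alpha>)"
    using budget_value_convex_le_horizon_lim[OF l base bounded] by (rule SUP_least)
  finally show ?thesis
    by (rule ennreal_le_if_convex_combination_le[OF l])
qed

lemma generation_lim_le_ETotal_star:
  assumes "valid_strategy p \<sigma>"
  shows "generation.bellman_lim q \<le> ETotal_star p c [q] \<sigma>"
  unfolding generation.bellman_lim_def
proof (rule SUP_least)
  fix K
  have "generation.bellman_iter K q = budget_value [(q, K)]"
    by (simp add: budget_value_def)
  also have "\<dots> \<le> horizon.bellman_lim [q]"
    using budget_value_le_horizon_lim[of "[(q, K)]" K] by simp
  also have "\<dots> \<le> ETotal_star p c [q] \<sigma>"
    unfolding horizon.bellman_lim_def ETotal_star_def ETotal_N_def
    using horizon_iter_le_ETN[OF assms, of _ "([q], [])"] by (intro SUP_mono) (auto simp: hlast_def)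
  finally show "generation.bellman_iter K q \<le> ETotal_star p c [q] \<sigma>" .
qed

lemma ETN_static_strategy_le:
  assumes s: "\<And>q. s q \<in> acts p q" and v: "\<And>q. type_action_value p c v q (s q) \<le> v q"
  shows "ETN p c (static_strategy s) n h \<le> sum_list (map v (hlast h))"
proof (induction n arbitrary: h)
  case (Suc n)
  show ?case
  proof (cases "hlast h")
    case (Cons q r)
    define d where "d = the (p q (s q))"
    have "finite (set_pmf d)"
      using finite_set_pmf_action[OF s] by (simp add: d_def)
    have "ETN p c (static_strategy s) (Suc n) h = ennreal (c q (s q)) +
        pmf_expect d (\<lambda>\<beta>. ETN p c (static_strategy s) n (fst h, snd h @ [((0, s q), \<beta> @ r)]))"
      using Cons
      by (simp add: ETN_Suc static_strategy_def pmf_expect_def action_value_def successor_def d_def)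
    also have "\<dots> \<le> ennreal (c q (s q)) + pmf_expect d (\<lambda>\<beta>. sum_list (map v \<beta>) + sum_list (map v r))"
    proof (intro add_left_mono pmf_expect_mono)
      fix \<beta>
      show "ETN p c (static_strategy s) n (fst h, snd h @ [((0, s q), \<beta> @ r)])
          \<le> sum_list (map v \<beta>) + sum_list (map v r)"
        using Suc.IH[of "(fst h, snd h @ [((0, s q), \<beta> @ r)])"] by (simp add: hlast_def)
    qed
    also have "\<dots> = type_action_value p c v q (s q) + sum_list (map v r)"
      using \<open>finite (set_pmf d)\<close>
      by (simp add: type_action_value_def pmf_expect_add pmf_expect_const d_def add.assoc)
    also have "\<dots> \<le> sum_list (map v (hlast h))"
      using v Cons by (simp add: add_right_mono)
    finally show ?thesis .
  qed simp
qed simp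

lemma ETotal_star_static_strategy_le:
  assumes "\<And>q. s q \<in> acts p q" "\<And>q. type_action_value p c v q (s q) \<le> v q"
  shows "ETotal_star p c [q] (static_strategy s) \<le> v q"
  unfolding ETotal_star_def ETotal_N_def
  using ETN_static_strategy_le[OF assms, of _ "([q], [])"] by (simp add: SUP_least hlast_def)

end

theorem corollary1:
  fixes p :: "'t::finite \<Rightarrow> 'a::finite \<Rightarrow> 't list pmf option"
    and c :: "'t \<Rightarrow> 'a \<Rightarrow> real"
  assumes "wf_bmdp p c"
  shows "\<exists>\<sigma>. valid_strategy p \<sigma> \<and> is_static p \<sigma> \<and>
           (\<forall>q. ETotal_star p c [q] \<sigma> = ETotal_opt p c [q])"
proof -
  interpret bmdp p c
    by (rule bmdp.intro[OF assms])
  obtain s where s: "\<And>q. s q \<in> acts p q"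
    and s_opt: "\<And>q. type_action_value p c generation.bellman_lim q (s q) \<le> generation.bellman_lim q"
    using generation.ex_F_bellman_lim_le[OF acts_nonempty] by metis
  define \<sigma> where "\<sigma> = static_strategy s"
  have valid: "valid_strategy p \<sigma>"
    unfolding \<sigma>_def using s by (rule valid_static_strategy)
  have "ETotal_star p c [q] \<sigma> = ETotal_opt p c [q]" for q
  proof (rule antisym)
    have "ETotal_star p c [q] \<sigma> \<le> generation.bellman_lim q"
      unfolding \<sigma>_def using s s_opt by (rule ETotal_star_static_strategy_le)
    also have "\<dots> \<le> ETotal_opt p c [q]"
      unfolding ETotal_opt_def by (auto intro: INF_greatest generation_lim_le_ETotal_star)
    finally show "ETotal_star p c [q] \<sigma> \<le> ETotal_opt p c [q]" .
    show "ETotal_opt p c [q] \<le> ETotal_star p c [q] \<sigma>"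
      unfolding ETotal_opt_def using valid by (auto intro: INF_lower)
  qed
  then show ?thesis
    using valid is_static_static_strategy[OF s] unfolding \<sigma>_def by blast
qed

end
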